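(* Let $p_0,p_1,p_2,T>0$, let $\Lambda\subset[0,\infty)$ have finite measure, $q_k=p_k^{-1/2}$ ($k=0,1,2$), and $$p=p_0\chi_{(-\infty,-T/2]}+p_1\chi_{(-T/2,T/2]}+p_2\chi_{(T/2,\infty)}.$$ Set $$C=\tfrac1{16q_0^2}\Big[\big(1+\tfrac{q_0}{q_1}\big)^2\big(1+\tfrac{q_1}{q_2}\big)^2+\big(1-\tfrac{q_0}{q_1}\big)^2\big(1-\tfrac{q_1}{q_2}\big)^2\Big],\quad K=\tfrac1{8q_0^2}\big(1-\tfrac{q_0^2}{q_1^2}\big)\big(1-\tfrac{q_1^2}{q_2^2}\big),\quad \zeta=2q_1T.$$ Then for all $u>0$, $\kappa(u):=\frac{|a_0^+(u^2)|^2}{q_0^2}=C+K\cos(\zeta u)$, and hence $$J(s):=\frac1{2\pi}\int_{\Lambda^{1/2}}\frac{e^{isu}}{\kappa(u)}\,du=\frac1{2\pi}\int_{\Lambda^{1/2}}\frac{e^{isu}}{C+K\cos\zeta u}\,du,\quad s\in\mathbb{R}.$$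
   Context: $\Lambda^{1/2}=\{u\ge0:u^2\in\Lambda\}$. Here $n=2$, $t_1=-T/2$, $t_2=T/2$. For $z\in\mathbb{C}\setminus(-\infty,0]$ with principal square root $\sqrt z$ and $k=1,2$ let $$L_k(z)=\frac12\begin{bmatrix}\left(1+\frac{q_k}{q_{k-1}}\right)e^{it_k(q_{k-1}-q_k)\sqrt z} & \left(1-\frac{q_k}{q_{k-1}}\right)e^{-it_k(q_{k-1}+q_k)\sqrt z}\\ \left(1-\frac{q_k}{q_{k-1}}\right)e^{it_k(q_{k-1}+q_k)\sqrt z} & \left(1+\frac{q_k}{q_{k-1}}\right)e^{-it_k(q_{k-1}-q_k)\sqrt z}\end{bmatrix},$$ $R_k=L_k^{-1}$, and define $(a_2^+,b_2^+)=(1,0)$, $(a_l^+,b_l^+)^T=R_{l+1}(z)(a_{l+1}^+,b_{l+1}^+)^T$ for $l=1,0$. *)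

theory Defs
  imports "HOL-Analysis.Analysis"
begin

text \<open>Transfer matrix L_k(z), with q_{k-1} = qp, q_k = qk, t_k = t; entries indexed by 1,2.
  The square root is the principal one (csqrt).\<close>
definition Lmat :: "real \<Rightarrow> real \<Rightarrow> real \<Rightarrow> complex \<Rightarrow> complex^2^2" where
  "Lmat qp qk t z = (let s = csqrt z; r = complex_of_real (qk / qp) in
     (\<chi> i j. if i = 1 then
                (if j = 1 then (1 + r) / 2 * exp (\<i> * t * (qp - qk) * s)
                          else (1 - r) / 2 * exp (- \<i> * t * (qp + qk) * s))
              else
                (if j = 1 then (1 - r) / 2 * exp (\<i> * t * (qp + qk) * s)
                          else (1 + r) / 2 * exp (- \<i> * t * (qp - qk) * s))))"

definition Rmat :: "real \<Rightarrow> real \<Rightarrow> real \<Rightarrow> complex \<Rightarrow> complex^2^2" where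
  "Rmat qp qk t z = matrix_inv (Lmat qp qk t z)"

definition ab_plus :: "real \<Rightarrow> real \<Rightarrow> real \<Rightarrow> real \<Rightarrow> nat \<Rightarrow> complex \<Rightarrow> complex^2" where
  "ab_plus q0 q1 q2 T l z =
     (let v2 = (\<chi> i. if i = 1 then 1 else 0) :: complex^2;
          v1 = Rmat q1 q2 (T/2) z *v v2;
          v0 = Rmat q0 q1 (-T/2) z *v v1
      in if l = 2 then v2 else if l = 1 then v1 else v0)"

definition a_plus :: "real \<Rightarrow> real \<Rightarrow> real \<Rightarrow> real \<Rightarrow> nat \<Rightarrow> complex \<Rightarrow> complex" where
  "a_plus q0 q1 q2 T l z = ab_plus q0 q1 q2 T l z $ 1"

definition sqrt_set :: "real set \<Rightarrow> real set" where
  "sqrt_set \<Lambda> = {u. u \<ge> 0 \<and> u\<^sup>2 \<in> \<Lambda>}"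

end

theory Submission
  imports Defs
begin

text \<open>With \<open>z = u\<^sup>2\<close> and \<open>u \<ge> 0\<close> every exponential in the transfer matrices is a point of the
  unit circle, and inverting the two \<open>2\<times>2\<close> matrices explicitly writes \<open>a\<^sub>0\<^sup>+(u\<^sup>2)\<close> as
  \<open>A e\<^sup>i\<^sup>\<alpha> + B e\<^sup>i\<^sup>\<beta>\<close> with real \<open>A = (q\<^sub>0+q\<^sub>1)(q\<^sub>1+q\<^sub>2)/(4q\<^sub>1q\<^sub>2)\<close>,
  \<open>B = (q\<^sub>0-q\<^sub>1)(q\<^sub>1-q\<^sub>2)/(4q\<^sub>1q\<^sub>2)\<close> and phase difference \<open>\<beta> - \<alpha> = 2q\<^sub>1Tu\<close>.
  Hence \<open>|a\<^sub>0\<^sup>+|\<^sup>2 = A\<^sup>2 + B\<^sup>2 + 2AB cos(2q\<^sub>1Tu)\<close>, which is \<open>q\<^sub>0\<^sup>2(C + K cos \<zeta>u)\<close>.\<close>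

definition mat2 :: "'a \<Rightarrow> 'a \<Rightarrow> 'a \<Rightarrow> 'a \<Rightarrow> 'a^2^2" where
  "mat2 a b c d = (\<chi> i j. if i = 1 then (if j = 1 then a else b) else (if j = 1 then c else d))"

lemma mat2_mult:
  fixes a b c d :: "'a::semiring_1"
  shows "mat2 a b c d ** mat2 a' b' c' d' =
    mat2 (a*a' + b*c') (a*b' + b*d') (c*a' + d*c') (c*b' + d*d')"
  unfolding mat2_def matrix_matrix_mult_def by (simp add: vec_eq_iff forall_2 sum_2)

lemma mat_1_eq_mat2: "mat 1 = mat2 1 0 0 1"
  unfolding mat2_def mat_def by (simp add: vec_eq_iff forall_2)

lemma mat2_eq_iff: "mat2 a b c d = mat2 a' b' c' d' \<longleftrightarrow> a = a' \<and> b = b' \<and> c = c' \<and> d = d'"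
  unfolding mat2_def by (auto simp add: vec_eq_iff forall_2)

lemma mat2_mult_vec:
  fixes a b c d :: "'a::semiring_1"
  shows "mat2 a b c d *v (\<chi> i. if i = 1 then x else y) =
    (\<chi> i. if i = 1 then a*x + b*y else c*x + d*y)"
  unfolding mat2_def matrix_vector_mult_def by (simp add: vec_eq_iff forall_2 sum_2)

lemma matrix_inv_eqI:
  fixes A :: "'a::semiring_1^'n^'m" and B :: "'a^'m^'n"
  assumes "A ** B = mat 1" and "B ** A = mat 1"
  shows "matrix_inv A = B"
proof -
  let ?A' = "matrix_inv A"
  have inv: "A ** ?A' = mat 1 \<and> ?A' ** A = mat 1"
    unfolding matrix_inv_def by (rule someI[of _ B]) (use assms in blast)
  have "?A' = ?A' ** (A ** B)"
    using assms(1) by simp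
  also have "\<dots> = (?A' ** A) ** B"
    by (rule matrix_mul_assoc)
  also have "\<dots> = B"
    using inv by simp
  finally show ?thesis .
qed

lemma matrix_inv_mat2:
  fixes a b c d :: "'a::field"
  assumes "a*d - b*c = \<delta>" and "\<delta> \<noteq> 0"
  shows "matrix_inv (mat2 a b c d) = mat2 (d/\<delta>) (- b/\<delta>) (- c/\<delta>) (a/\<delta>)"
  using assms
  by (intro matrix_inv_eqI) (simp_all add: mat2_mult mat_1_eq_mat2 mat2_eq_iff field_simps)

text \<open>The transfer matrix has the shape \<open>[[\<alpha> e\<^sub>1, \<beta>/e\<^sub>2], [\<beta> e\<^sub>2, \<alpha>/e\<^sub>1]]\<close> with
  \<open>\<alpha> = (1+r)/2\<close>, \<open>\<beta> = (1-r)/2\<close>, so its determinant is \<open>\<alpha>\<^sup>2 - \<beta>\<^sup>2 = r\<close>.\<close>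

lemma Rmat_eq_mat2:
  fixes qp qk t :: real and z :: complex
  assumes "qp \<noteq> 0" and "qk \<noteq> 0"
  defines "r \<equiv> complex_of_real (qk / qp)"
    and "e1 \<equiv> exp (\<i> * t * (qp - qk) * csqrt z)"
    and "e2 \<equiv> exp (\<i> * t * (qp + qk) * csqrt z)"
  shows "Rmat qp qk t z =
    mat2 ((1 + r) / (2*r) / e1) (- (1 - r) / (2*r) / e2) (- (1 - r) / (2*r) * e2) ((1 + r) / (2*r) * e1)"
proof -
  have exp_neg: "exp (- \<i> * t * q * csqrt z) = 1 / exp (\<i> * t * q * csqrt z)" for q :: real
    by (simp add: exp_minus inverse_eq_divide)
  have "Lmat qp qk t z =
      mat2 ((1 + r) / 2 * e1) ((1 - r) / 2 * (1 / e2)) ((1 - r) / 2 * e2) ((1 + r) / 2 * (1 / e1))"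
    unfolding Lmat_def mat2_def Let_def r_def e1_def e2_def exp_neg by simp
  moreover have "r \<noteq> 0" "e1 \<noteq> 0" "e2 \<noteq> 0"
    using assms(1,2) by (simp_all add: r_def e1_def e2_def)
  moreover from this(2,3) have
    "(1 + r) / 2 * e1 * ((1 + r) / 2 * (1 / e1)) - (1 - r) / 2 * (1 / e2) * ((1 - r) / 2 * e2) = r"
    by (simp add: field_simps)
  ultimately show ?thesis
    unfolding Rmat_def by (simp add: matrix_inv_mat2 mat2_eq_iff field_simps)
qed

lemma a_plus_0_of_square:
  fixes q0 q1 q2 T u :: real
  assumes "q0 \<noteq> 0" "q1 \<noteq> 0" "q2 \<noteq> 0" and "u \<ge> 0"
  shows "a_plus q0 q1 q2 T 0 (complex_of_real (u\<^sup>2)) =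
      complex_of_real ((q0 + q1) * (q1 + q2) / (4 * q1 * q2)) * cis (T/2 * (q0 - 2*q1 + q2) * u)
    + complex_of_real ((q0 - q1) * (q1 - q2) / (4 * q1 * q2)) * cis (T/2 * (q0 + 2*q1 + q2) * u)"
proof -
  define r1 where "r1 = complex_of_real (q1 / q0)"
  define r2 where "r2 = complex_of_real (q2 / q1)"
  define E1 where "E1 = cis (T/2 * (q1 - q2) * u)"
  define E2 where "E2 = cis (T/2 * (q1 + q2) * u)"
  define F1 where "F1 = cis (-T/2 * (q0 - q1) * u)"
  define F2 where "F2 = cis (-T/2 * (q0 + q1) * u)"
  have csqrt: "csqrt (complex_of_real (u\<^sup>2)) = complex_of_real u"
    using assms(4) by simp
  have exp_cis: "exp (\<i> * complex_of_real t * complex_of_real q * complex_of_real u) = cis (t*q*u)"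
    for t q :: real
    by (simp add: cis_conv_exp mult.assoc)
  have a0: "a_plus q0 q1 q2 T 0 (complex_of_real (u\<^sup>2)) =
      (1 + r1) / (2*r1) / F1 * ((1 + r2) / (2*r2) / E1) + (- (1 - r1) / (2*r1) / F2) * (- (1 - r2) / (2*r2) * E2)"
    unfolding a_plus_def ab_plus_def Let_def Rmat_eq_mat2[OF assms(1,2)] Rmat_eq_mat2[OF assms(2,3)]
      csqrt exp_cis mat2_mult_vec r1_def r2_def E1_def E2_def F1_def F2_def
    by simp
  have phase1: "cis (T/2 * (q0 - 2*q1 + q2) * u) = 1 / (F1 * E1)"
    unfolding F1_def E1_def
    by (simp add: cis_mult flip: inverse_eq_divide) (rule arg_cong[where f = cis], simp add: field_simps)
  have phase2: "cis (T/2 * (q0 + 2*q1 + q2) * u) = E2 / F2"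
    unfolding F2_def E2_def
    by (simp add: cis_divide) (rule arg_cong[where f = cis], simp add: field_simps)
  have coeff1: "complex_of_real ((q0 + q1) * (q1 + q2) / (4 * q1 * q2)) = (1 + r1) * (1 + r2) / (4 * r1 * r2)"
    and coeff2: "complex_of_real ((q0 - q1) * (q1 - q2) / (4 * q1 * q2)) = (1 - r1) * (1 - r2) / (4 * r1 * r2)"
    using assms(1-3) by (simp_all add: r1_def r2_def field_simps)
  have "r1 \<noteq> 0" "r2 \<noteq> 0" "E1 \<noteq> 0" "E2 \<noteq> 0" "F1 \<noteq> 0" "F2 \<noteq> 0"
    using assms(1-3) by (simp_all add: r1_def r2_def E1_def E2_def F1_def F2_def)
  then show ?thesis
    unfolding a0 phase1 phase2 coeff1 coeff2 by (simp add: field_simps)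
qed

lemma cmod_power2_of_real_cis_add:
  "(cmod (complex_of_real A * cis a + complex_of_real B * cis b))\<^sup>2 = A\<^sup>2 + B\<^sup>2 + 2*A*B * cos (b - a)"
proof -
  have "(cmod (complex_of_real A * cis a + complex_of_real B * cis b))\<^sup>2 =
      (A * cos a + B * cos b)\<^sup>2 + (A * sin a + B * sin b)\<^sup>2"
    by (simp add: cmod_power2)
  moreover have "(sin a)\<^sup>2 + (cos a)\<^sup>2 = 1" "(sin b)\<^sup>2 + (cos b)\<^sup>2 = 1"
    by simp_all
  ultimately show ?thesis
    unfolding cos_diff by algebra
qed

theorem lemma4p1:
  fixes p0 p1 p2 T :: real and \<Lambda> :: "real set"
    and q0 q1 q2 C K \<zeta> :: real and \<kappa> :: "real \<Rightarrow> real"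
  assumes "p0 > 0" "p1 > 0" "p2 > 0" "T > 0"
    and "\<Lambda> \<subseteq> {0..}" "\<Lambda> \<in> sets lebesgue" "emeasure lebesgue \<Lambda> < \<infinity>"
  defines "q0 \<equiv> p0 powr (-1/2)" and "q1 \<equiv> p1 powr (-1/2)" and "q2 \<equiv> p2 powr (-1/2)"
  defines "C \<equiv> 1 / (16 * q0\<^sup>2) * ((1 + q0/q1)\<^sup>2 * (1 + q1/q2)\<^sup>2 + (1 - q0/q1)\<^sup>2 * (1 - q1/q2)\<^sup>2)"
    and "K \<equiv> 1 / (8 * q0\<^sup>2) * (1 - q0\<^sup>2/q1\<^sup>2) * (1 - q1\<^sup>2/q2\<^sup>2)"
    and "\<zeta> \<equiv> 2 * q1 * T"
    and "\<kappa> \<equiv> (\<lambda>u. (cmod (a_plus q0 q1 q2 T 0 (complex_of_real (u\<^sup>2))))\<^sup>2 / q0\<^sup>2)"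
  shows "(\<forall>u > 0. \<kappa> u = C + K * cos (\<zeta> * u)) \<and>
    (\<forall>s::real.
      1 / (2 * pi) * (LINT u : sqrt_set \<Lambda> | lebesgue. exp (\<i> * s * u) / complex_of_real (\<kappa> u)) =
      1 / (2 * pi) * (LINT u : sqrt_set \<Lambda> | lebesgue. exp (\<i> * s * u) / complex_of_real (C + K * cos (\<zeta> * u))))"
proof -
  have q: "q0 \<noteq> 0" "q1 \<noteq> 0" "q2 \<noteq> 0"
    using assms(1-3) by (simp_all add: q0_def q1_def q2_def)
  define A where "A = (q0 + q1) * (q1 + q2) / (4 * q1 * q2)"
  define B where "B = (q0 - q1) * (q1 - q2) / (4 * q1 * q2)"
  have C: "C = (A\<^sup>2 + B\<^sup>2) / q0\<^sup>2" and K: "K = 2*A*B / q0\<^sup>2"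
    using q by (simp_all add: C_def K_def A_def B_def field_simps power2_eq_square)
  have kappa: "\<kappa> u = C + K * cos (\<zeta> * u)" if "u \<ge> 0" for u
  proof -
    have "T/2 * (q0 + 2*q1 + q2) * u - T/2 * (q0 - 2*q1 + q2) * u = \<zeta> * u"
      by (simp add: \<zeta>_def algebra_simps)
    then show ?thesis
      unfolding \<kappa>_def a_plus_0_of_square[OF q that] A_def[symmetric] B_def[symmetric]
        cmod_power2_of_real_cis_add C K
      by (simp add: add_divide_distrib)
  qed
  \<comment> \<open>The integrands agree pointwise on \<open>sqrt_set \<Lambda>\<close>.\<close>
  have "(\<lambda>u. indicator (sqrt_set \<Lambda>) u *\<^sub>R (exp (\<i> * s * u) / complex_of_real (\<kappa> u))) =
      (\<lambda>u. indicator (sqrt_set \<Lambda>) u *\<^sub>R (exp (\<i> * s * u) / complex_of_real (C + K * cos (\<zeta> * u))))"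
    for s :: real
    by (auto simp: indicator_def sqrt_set_def kappa)
  then show ?thesis
    using kappa by (simp add: set_lebesgue_integral_def)
qed

end
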